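(* Suppose $\xi\star\pi\in\perp\!\!\!\perp$. Then: (1) $\xi'\star\pi'\in\perp\!\!\!\perp$, where $\xi'\star\pi'$ is obtained from $\xi\star\pi$ by substituting arbitrary terms for the non-efficient occurrences of $p$; (2) if $\xi'\star\pi'$ is obtained from $\xi\star\pi$ by substituting $q_0$ for the efficient occurrence of $p$ and arbitrary terms for the non-efficient occurrences of $p$, then $\xi'\star\pi'\notin\perp\!\!\!\perp$, and indeed $\xi'\star\pi'\succ q_0\star\varpi$ for some stack $\varpi$.
   Context: Fix an integer $N\ge 0$. The set $\Lambda$ of terms is the smallest set containing the constants $B,C,I,K,W,cc,A$ and $p,q_0,\dots,q_N$, closed under application $(\xi)\eta$ (written $\xi\eta$), and containing, for each sequence $(\xi_i)_{i\in\mathbb N}$ of closed terms (no occurrence of $p,q_0,\dots,q_N$), a constant $\bigwedge_i\xi_i$ (injectively, well-founded). Stacks: finite sequences $t_0\cdot\ldots\cdot t_{n-1}\cdot\pi_0$ of terms, $\pi_0$ the empty stack; $\Pi$ the set of stacks. $\ell_t=((C)(B)CB)t$, $k_{\pi_0}=A$, $k_{t\cdot\pi}=(\ell_t)k_\pi$; $\sigma=(BW)(C)(B)BB$, $\underline0=(K)I$, $\underline{n+1}=(\sigma)\underline n$. Execution $\succ$ is generated by the one-step rules: $(\xi)\eta\star\pi\succ\xi\star\eta\cdot\pi$; $B\star\xi\cdot\eta\cdot\zeta\cdot\pi\succ\xi\star(\eta)\zeta\cdot\pi$; $C\star\xi\cdot\eta\cdot\zeta\cdot\pi\succ\xi\star\zeta\cdot\eta\cdot\pi$;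 $I\star\xi\cdot\pi\succ\xi\star\pi$; $K\star\xi\cdot\eta\cdot\pi\succ\xi\star\pi$; $W\star\xi\cdot\eta\cdot\pi\succ\xi\star\eta\cdot\eta\cdot\pi$; $cc\star\xi\cdot\pi\succ\xi\star k_\pi\cdot\pi$; $A\star\xi\cdot\pi\succ\xi\star\pi_0$; $\bigwedge_i\xi_i\star\underline n\cdot\pi\succ\xi_n\star\pi$ (at most one rule applies to a given process). Pole $\perp\!\!\!\perp=\{\xi\star\pi:\exists\varpi,\ \xi\star\pi\succ p\star\varpi\}$. Efficient occurrence: for each process $\xi\star\pi\in\perp\!\!\!\perp$ one occurrence of $p$ in it is called efficient, defined by recursion on the length of the execution of $\xi\star\pi$ to a process of the form $p\star\varpi$: if $\xi=p$, it is this head occurrence; otherwise $\xi\star\pi$ reduces in one step by one of the rules above to a process $\xi_1\star\pi_1\in\perp\!\!\!\perp$, and the efficient occurrence of $\xi\star\pi$ is the occurrence of $p$ in $\xi\star\pi$ from which the efficient occurrence of $p$ in $\xi_1\star\pi_1$ originates under that rule (e.g. for the $cc$ rule, an occurrence lying in $k_\pi$ or in $\pi$ in $\xi\star k_\pi\cdot\pi$ corresponds to the matching occurrence in $\pi$ in $cc\star\xi\cdot\pi$). *)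

theory Defs
  imports Main
begin

text \<open>Terms, parametrised by a type of labels carried by occurrences of the
constant p.  The genuine terms of the paper are the terms of type unit tm
(p = P ()).  Labelled terms (type nat tm) are used to name individual
occurrences of p, so that the origin of occurrences can be traced through
execution.  Q i is the constant q_i; Inf f is the constant for the
sequence f (closedness is imposed by wf_tm).\<close>

datatype 'l tm = B | C | I | K | W | CC | A | P 'l | Q nat
  | App "'l tm" "'l tm" | Inf "nat \<Rightarrow> 'l tm"

primrec closed_tm :: "'l tm \<Rightarrow> bool" where
  "closed_tm B = True" | "closed_tm C = True" | "closed_tm I = True"
| "closed_tm K = True" | "closed_tm W = True" | "closed_tm CC = True"
| "closed_tm A = True" | "closed_tm (P l) = False" | "closed_tm (Q i) = False"
| "closed_tm (App s t) = (closed_tm s \<and> closed_tm t)"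
| "closed_tm (Inf f) = (\<forall>i. closed_tm (f i))"

primrec wf_tm :: "nat \<Rightarrow> 'l tm \<Rightarrow> bool" where
  "wf_tm N B = True" | "wf_tm N C = True" | "wf_tm N I = True"
| "wf_tm N K = True" | "wf_tm N W = True" | "wf_tm N CC = True"
| "wf_tm N A = True" | "wf_tm N (P l) = True" | "wf_tm N (Q i) = (i \<le> N)"
| "wf_tm N (App s t) = (wf_tm N s \<and> wf_tm N t)"
| "wf_tm N (Inf f) = (\<forall>i. closed_tm (f i) \<and> wf_tm N (f i))"

type_synonym 'l proc = "'l tm \<times> 'l tm list"

definition ell :: "'l tm \<Rightarrow> 'l tm" where
  "ell t = App (App C (App (App B C) B)) t"

primrec kst :: "'l tm list \<Rightarrow> 'l tm" where
  "kst [] = A"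
| "kst (t # \<pi>) = App (ell t) (kst \<pi>)"

definition sigma :: "'l tm" where
  "sigma = App (App B W) (App C (App (App B B) B))"

primrec num :: "nat \<Rightarrow> 'l tm" where
  "num 0 = App K I"
| "num (Suc n) = App sigma (num n)"

fun step :: "'l proc \<Rightarrow> 'l proc option" where
  "step (App x y, \<pi>) = Some (x, y # \<pi>)"
| "step (B, x # y # z # \<pi>) = Some (x, App y z # \<pi>)"
| "step (C, x # y # z # \<pi>) = Some (x, z # y # \<pi>)"
| "step (I, x # \<pi>) = Some (x, \<pi>)"
| "step (K, x # y # \<pi>) = Some (x, \<pi>)"
| "step (W, x # y # \<pi>) = Some (x, y # y # \<pi>)"
| "step (CC, x # \<pi>) = Some (x, kst \<pi> # \<pi>)"
| "step (A, x # \<pi>) = Some (x, [])"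
| "step (Inf f, x # \<pi>) =
     (if \<exists>n. x = num n then Some (f (THE n. x = num n), \<pi>) else None)"
| "step _ = None"

definition exec :: "'l proc \<Rightarrow> 'l proc \<Rightarrow> bool" where
  "exec = (\<lambda>a b. step a = Some b)\<^sup>*\<^sup>*"

definition pole :: "'l proc \<Rightarrow> bool" where
  "pole pr \<longleftrightarrow> (\<exists>l \<omega>. exec pr (P l, \<omega>))"

primrec subst :: "('l \<Rightarrow> 'm tm) \<Rightarrow> 'l tm \<Rightarrow> 'm tm" where
  "subst g B = B" | "subst g C = C" | "subst g I = I"
| "subst g K = K" | "subst g W = W" | "subst g CC = CC"
| "subst g A = A" | "subst g (P l) = g l" | "subst g (Q i) = Q i"
| "subst g (App s t) = App (subst g s) (subst g t)"
| "subst g (Inf f) = Inf (\<lambda>i. subst g (f i))"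

definition subst_proc :: "('l \<Rightarrow> 'm tm) \<Rightarrow> 'l proc \<Rightarrow> 'm proc" where
  "subst_proc g pr = (subst g (fst pr), map (subst g) (snd pr))"

definition erase_proc :: "'l proc \<Rightarrow> unit proc" where
  "erase_proc = subst_proc (\<lambda>_. P ())"

text \<open>Labels of the occurrences of p (constants for sequences are closed, so
contain no occurrence of p).\<close>
primrec occs :: "'l tm \<Rightarrow> 'l list" where
  "occs B = []" | "occs C = []" | "occs I = []"
| "occs K = []" | "occs W = []" | "occs CC = []"
| "occs A = []" | "occs (P l) = [l]" | "occs (Q i) = []"
| "occs (App s t) = occs s @ occs t"
| "occs (Inf f) = []"

definition proc_occs :: "'l proc \<Rightarrow> 'l list" where
  "proc_occs pr = occs (fst pr) @ concat (map occs (snd pr))"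

text \<open>In a process whose occurrences of p carry pairwise distinct labels, the
efficient occurrence is the one whose label ends up in head position:
labels are moved/copied/discarded along with the subterms carrying them,
which is exactly the origin relation of the paper.\<close>
definition eff :: "'l proc \<Rightarrow> 'l" where
  "eff L = (THE l. \<exists>\<omega>. exec L (P l, \<omega>))"

end

theory Submission
  imports Defs
begin

text \<open>Substituting terms for the occurrences of p commutes with execution, because
p is inert and the only rule inspecting an argument (that of the constants for
sequences) looks for a numeral, which contains no p. Relabelling occurrences of p
is moreover reflected by execution, so the labelled process executes in lockstep
with its erasure and reaches a head occurrence labelled by the efficient label.
Substituting into that execution yields one ending with head g of the efficient
label, and since execution is deterministic, a process reaching a stuck process
with head q_0 can never reach one with head p.\<close>

lemma num_eq_iff [simp]: "num m = num n \<longleftrightarrow> m = n"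
  by (induction m arbitrary: n) (case_tac n; simp add: sigma_def)+

lemma closed_num: "closed_tm (num n)"
  by (induction n) (simp_all add: sigma_def)

lemma subst_num [simp]: "subst g (num n) = num n"
  by (induction n) (simp_all add: sigma_def)

lemma subst_kst [simp]: "subst g (kst \<pi>) = kst (map (subst g) \<pi>)"
  by (induction \<pi>) (simp_all add: ell_def)

lemma step_subst_proc:
  "step pr = Some pr' \<Longrightarrow> step (subst_proc g pr) = Some (subst_proc g pr')"
  by (induction pr rule: step.induct) (auto simp: subst_proc_def split: if_splits)

lemma exec_subst_proc: "exec pr pr' \<Longrightarrow> exec (subst_proc g pr) (subst_proc g pr')"
  unfolding exec_def
  by (induction rule: rtranclp_induct) (auto intro: rtranclp.rtrancl_into_rtrancl step_subst_proc)

lemma relabel_eq_subst_closed: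
  "subst (\<lambda>l. P (r l)) x = subst g y \<Longrightarrow> closed_tm y \<Longrightarrow> x = y"
proof (induction x arbitrary: y)
  case (Inf f)
  then obtain f' where y: "y = Inf f'"
    by (cases y) auto
  have "f i = f' i" for i
    using Inf.IH[of "f i" "f' i"] Inf.prems y by (auto dest: fun_cong[where x = i])
  then show ?case
    using y by auto
qed (case_tac y; auto)+

lemma relabel_eq_num_iff [simp]: "subst (\<lambda>l. P (r l)) x = num n \<longleftrightarrow> x = num n"
proof
  show "subst (\<lambda>l. P (r l)) x = num n \<Longrightarrow> x = num n"
    by (rule relabel_eq_subst_closed[of r x g "num n"]) (simp_all add: closed_num)
qed simp

lemma step_relabel:
  "step (subst_proc (\<lambda>l. P (r l)) pr) = map_option (subst_proc (\<lambda>l. P (r l))) (step pr)"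
  by (induction pr rule: step.induct) (auto simp: subst_proc_def)

lemma exec_relabelE:
  assumes "exec (subst_proc (\<lambda>l. P (r l)) pr) qr"
  obtains pr' where "exec pr pr'" and "qr = subst_proc (\<lambda>l. P (r l)) pr'"
proof -
  from assms have "\<exists>pr'. exec pr pr' \<and> qr = subst_proc (\<lambda>l. P (r l)) pr'"
    unfolding exec_def
  proof (induction rule: rtranclp_induct)
    case (step qr qr')
    then obtain pr' where "(\<lambda>a b. step a = Some b)\<^sup>*\<^sup>* pr pr'"
      and "step (subst_proc (\<lambda>l. P (r l)) pr') = Some qr'"
      by auto
    then show ?case
      by (auto simp: step_relabel intro: rtranclp.rtrancl_into_rtrancl)
  qed blast
  then show thesis
    using that by blast
qed

lemma exec_linear: "exec pr a \<Longrightarrow> exec pr b \<Longrightarrow> exec a b \<or> exec b a"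
  unfolding exec_def
proof (induction rule: rtranclp_induct)
  case (step a a')
  from step.IH[OF step.prems] show ?case
  proof
    assume "(\<lambda>a b. step a = Some b)\<^sup>*\<^sup>* a b"
    then show ?thesis
      using step.hyps(2) by (cases rule: converse_rtranclpE) auto
  qed (use step.hyps(2) in \<open>auto intro: rtranclp.rtrancl_into_rtrancl\<close>)
qed auto

lemma exec_from_stuck: "exec a b \<Longrightarrow> step a = None \<Longrightarrow> b = a"
  unfolding exec_def by (auto elim: converse_rtranclpE)

lemma exec_stuck_unique:
  "exec pr a \<Longrightarrow> exec pr b \<Longrightarrow> step a = None \<Longrightarrow> step b = None \<Longrightarrow> a = b"
proof -
  assume "exec pr a" "exec pr b" "step a = None" "step b = None"
  then consider "exec a b" | "exec b a"
    using exec_linear by blast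
  then show "a = b"
    using exec_from_stuck[of a b] exec_from_stuck[of b a] \<open>step a = None\<close> \<open>step b = None\<close>
    by cases blast+
qed

lemma eff_eqI: "exec L (P l, \<omega>) \<Longrightarrow> eff L = l"
  unfolding eff_def
  by (rule the_equality) (auto dest: exec_stuck_unique)

lemma exec_Q_not_pole: "exec pr (Q i, \<omega>) \<Longrightarrow> \<not> pole pr"
  unfolding pole_def by (auto dest: exec_stuck_unique)

lemma exec_eff_of_pole_erase:
  assumes "pole (erase_proc L)"
  obtains \<omega> where "exec L (P (eff L), \<omega>)"
proof -
  from assms obtain u \<omega> where "exec (subst_proc (\<lambda>_. P ()) L) (P u, \<omega>)"
    unfolding pole_def erase_proc_def by auto
  then obtain L' where L': "exec L L'" "(P u, \<omega>) = subst_proc (\<lambda>_. P ()) L'"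
    by (rule exec_relabelE)
  then obtain l \<omega>' where "L' = (P l, \<omega>')"
    by (cases L', case_tac a) (auto simp: subst_proc_def)
  with L' have "exec L (P l, \<omega>')"
    by simp
  moreover from this have "eff L = l"
    by (rule eff_eqI)
  ultimately show thesis
    using that by simp
qed

theorem lemma4:
  fixes N :: nat and \<xi> :: "unit tm" and \<pi> :: "unit tm list"
    and L :: "nat proc"
  assumes "wf_tm N \<xi>" and "\<forall>t\<in>set \<pi>. wf_tm N t"
    and "pole (\<xi>, \<pi>)"
    and "erase_proc L = (\<xi>, \<pi>)" and "distinct (proc_occs L)"
  shows "(\<forall>g :: nat \<Rightarrow> unit tm. (\<forall>l. wf_tm N (g l)) \<and> g (eff L) = P ()
            \<longrightarrow> pole (subst_proc g L))
       \<and> (\<forall>g :: nat \<Rightarrow> unit tm. (\<forall>l. wf_tm N (g l)) \<and> g (eff L) = Q 0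
            \<longrightarrow> \<not> pole (subst_proc g L) \<and> (\<exists>\<omega>. exec (subst_proc g L) (Q 0, \<omega>)))"
proof -
  from assms(3,4) have "pole (erase_proc L)"
    by simp
  then obtain \<omega> where "exec L (P (eff L), \<omega>)"
    by (rule exec_eff_of_pole_erase)
  then have exec_g: "exec (subst_proc g L) (g (eff L), map (subst g) \<omega>)" for g
    using exec_subst_proc by (fastforce simp: subst_proc_def)
  show ?thesis
  proof (rule conjI; intro allI impI)
    fix g :: "nat \<Rightarrow> unit tm"
    assume "(\<forall>l. wf_tm N (g l)) \<and> g (eff L) = P ()"
    then show "pole (subst_proc g L)"
      unfolding pole_def using exec_g[of g] by auto
  next
    fix g :: "nat \<Rightarrow> unit tm"
    assume "(\<forall>l. wf_tm N (g l)) \<and> g (eff L) = Q 0"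
    then have "exec (subst_proc g L) (Q 0, map (subst g) \<omega>)"
      using exec_g[of g] by simp
    then show "\<not> pole (subst_proc g L) \<and> (\<exists>\<omega>. exec (subst_proc g L) (Q 0, \<omega>))"
      using exec_Q_not_pole by blast
  qed
qed

end
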